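(* Let $W$ be a finite-dimensional vector space over $\mathbb{F}_q$ and let $\mathcal{C}$ be a code (a set of subspaces of $W$) with $|\mathcal{C}|\ge 2$. Let $D(\mathcal{C})=\min_{X,Y\in\mathcal{C},X\ne Y} d(X,Y)$ and $\ell(\mathcal{C})=\max_{X\in\mathcal{C}}\dim X$, where $d(A,B)=\dim(A+B)-\dim(A\cap B)$. Let $V\in\mathcal{C}$, let $k\ge 0$ be an integer, and let $V'$ be a subspace of $V$ such that $V'$ is a $k$-dimensional subspace of $V$ if $\dim V>k$, and $V'=V$ otherwise. Let $E$ be a subspace of $W$ with $E\cap V'=\{0\}$ and $\dim E=t$, and let $U=V'\oplus E$. Let $\rho=\max\{0,\ell(\mathcal{C})-k\}$. If $2(t+\rho)<D(\mathcal{C})$, then $d(U,V)<d(U,T)$ for every $T\in\mathcal{C}$ with $T\ne V$; i.e., a minimum distance decoder (which returns a codeword nearest to $U$ in the metric $d$) returns $V$.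
   Context: A code is a nonempty set of subspaces of $W$. A minimum distance decoder takes a subspace $U$ and returns a codeword $V\in\mathcal{C}$ with $d(U,V)\le d(U,V'')$ for all $V''\in\mathcal{C}$. *)

theory Defs
  imports "HOL-Analysis.Cartesian_Space"
begin

text \<open>The ambient space W is modelled as the coordinate space F_q^n = 'a^'n with
  'a a finite field (every finite-dimensional space over F_q is isomorphic to one).\<close>

definition subspace_sum :: "('a::field^'n) set \<Rightarrow> ('a^'n) set \<Rightarrow> ('a^'n) set" where
  "subspace_sum A B = {x + y | x y. x \<in> A \<and> y \<in> B}"

definition subspace_dist :: "('a::field^'n) set \<Rightarrow> ('a^'n) set \<Rightarrow> nat" where
  "subspace_dist A B = vec.dim (subspace_sum A B) - vec.dim (A \<inter> B)"

definition min_dist :: "('a::field^'n) set set \<Rightarrow> nat" where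
  "min_dist C = Min {subspace_dist X Y | X Y. X \<in> C \<and> Y \<in> C \<and> X \<noteq> Y}"

definition max_dim :: "('a::field^'n) set set \<Rightarrow> nat" where
  "max_dim C = Max (vec.dim ` C)"

end

theory Submission
  imports Defs
begin

text \<open>The subspace distance is a metric, so a received space U within distance r of the
  sent codeword V, with 2 r below the minimum distance, is strictly closer to V than to any
  other codeword. Here U contains V', and dim U = dim V' + t, so d(U, V) is at most
  t + (dim V - dim V'), which is at most t + \<rho> by the choice of V'.\<close>

lemma subspace_sum_commute: "subspace_sum A B = subspace_sum B A"
  unfolding subspace_sum_def by (metis (no_types, lifting) add.commute)

lemma subspace_subspace_sum:
  "vec.subspace A \<Longrightarrow> vec.subspace B \<Longrightarrow> vec.subspace (subspace_sum A B)"
  unfolding subspace_sum_def by (rule vec.subspace_sums)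

lemma subset_subspace_sum_left: "vec.subspace B \<Longrightarrow> A \<subseteq> subspace_sum A B"
  unfolding subspace_sum_def by (force dest: vec.subspace_0)

lemma subspace_sum_subset:
  "vec.subspace S \<Longrightarrow> A \<subseteq> S \<Longrightarrow> B \<subseteq> S \<Longrightarrow> subspace_sum A B \<subseteq> S"
  unfolding subspace_sum_def by (auto intro: vec.subspace_add)

lemma dim_subspace_sum_Int:
  "vec.subspace A \<Longrightarrow> vec.subspace B \<Longrightarrow>
    vec.dim (subspace_sum A B) + vec.dim (A \<inter> B) = vec.dim A + vec.dim B"
  unfolding subspace_sum_def by (rule vec.dim_sums_Int)

lemma dim_subspace_sum_direct:
  "vec.subspace A \<Longrightarrow> vec.subspace B \<Longrightarrow> A \<inter> B = {0} \<Longrightarrow>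
    vec.dim (subspace_sum A B) = vec.dim A + vec.dim B"
  using dim_subspace_sum_Int[of A B] by simp

lemma subspace_dist_commute: "subspace_dist A B = subspace_dist B A"
  unfolding subspace_dist_def by (simp add: subspace_sum_commute Int_commute)

lemma subspace_dist_eq:
  fixes A B :: "('a::field^'n) set"
  assumes "vec.subspace A" "vec.subspace B"
  shows "int (subspace_dist A B) = int (vec.dim A) + int (vec.dim B) - 2 * int (vec.dim (A \<inter> B))"
proof -
  have "A \<inter> B \<subseteq> subspace_sum A B"
    using subset_subspace_sum_left[OF assms(2)] by blast
  then have "vec.dim (A \<inter> B) \<le> vec.dim (subspace_sum A B)"
    by (rule vec.dim_subset)
  then show ?thesis
    using dim_subspace_sum_Int[OF assms] unfolding subspace_dist_def by linarith
qed

lemma subspace_dist_triangle: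
  fixes A B X :: "('a::field^'n) set"
  assumes A: "vec.subspace A" and B: "vec.subspace B" and X: "vec.subspace X"
  shows "subspace_dist A X \<le> subspace_dist A B + subspace_dist B X"
proof -
  let ?P = "A \<inter> B" and ?Q = "B \<inter> X"
  have P: "vec.subspace ?P" and Q: "vec.subspace ?Q"
    using A B X by (auto intro: vec.subspace_inter)
  have "vec.dim (subspace_sum ?P ?Q) \<le> vec.dim B"
    by (rule vec.dim_subset, rule subspace_sum_subset[OF B]) auto
  moreover have "vec.dim (?P \<inter> ?Q) \<le> vec.dim (A \<inter> X)"
    by (rule vec.dim_subset) auto
  ultimately have "vec.dim ?P + vec.dim ?Q \<le> vec.dim B + vec.dim (A \<inter> X)"
    using dim_subspace_sum_Int[OF P Q] by linarith
  then show ?thesis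
    using subspace_dist_eq[OF A B] subspace_dist_eq[OF B X] subspace_dist_eq[OF A X] by linarith
qed

lemma subspace_dist_direct_sum_le:
  fixes V V' E :: "('a::field^'n) set"
  assumes V: "vec.subspace V" and V': "vec.subspace V'" "V' \<subseteq> V"
    and E: "vec.subspace E" "E \<inter> V' = {0}"
  shows "int (subspace_dist (subspace_sum V' E) V)
           \<le> int (vec.dim E) + int (vec.dim V) - int (vec.dim V')"
proof -
  let ?U = "subspace_sum V' E"
  have "V' \<subseteq> ?U \<inter> V"
    using subset_subspace_sum_left[OF E(1)] V'(2) by blast
  then have "vec.dim V' \<le> vec.dim (?U \<inter> V)"
    by (rule vec.dim_subset)
  moreover have "vec.dim ?U = vec.dim V' + vec.dim E"
    using dim_subspace_sum_direct[OF V'(1) E(1)] E(2) by (simp add: Int_commute)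
  ultimately show ?thesis
    using subspace_dist_eq[OF subspace_subspace_sum[OF V'(1) E(1)] V] by linarith
qed

lemma min_dist_le:
  assumes "finite C" "X \<in> C" "Y \<in> C" "X \<noteq> Y"
  shows "min_dist C \<le> subspace_dist X Y"
  unfolding min_dist_def
proof (rule Min_le)
  have "{subspace_dist X Y | X Y. X \<in> C \<and> Y \<in> C \<and> X \<noteq> Y}
          \<subseteq> (\<lambda>(X, Y). subspace_dist X Y) ` (C \<times> C)"
    by auto
  then show "finite {subspace_dist X Y | X Y. X \<in> C \<and> Y \<in> C \<and> X \<noteq> Y}"
    using assms(1) finite_subset by blast
  show "subspace_dist X Y \<in> {subspace_dist X Y | X Y. X \<in> C \<and> Y \<in> C \<and> X \<noteq> Y}"
    using assms(2-4) by blast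
qed

lemma dim_le_max_dim: "finite C \<Longrightarrow> X \<in> C \<Longrightarrow> vec.dim X \<le> max_dim C"
  unfolding max_dim_def by simp

lemma subspace_dist_unique_decoding:
  fixes C :: "('a::field^'n) set set"
  assumes code: "\<forall>X\<in>C. vec.subspace X" and "finite C"
    and U: "vec.subspace U" and VC: "V \<in> C" and TC: "T \<in> C" "T \<noteq> V"
    and close: "2 * subspace_dist U V < min_dist C"
  shows "subspace_dist U V < subspace_dist U T"
proof -
  have "min_dist C \<le> subspace_dist V T"
    using min_dist_le[OF \<open>finite C\<close> VC TC(1)] TC(2) by simp
  also have "\<dots> \<le> subspace_dist U V + subspace_dist U T"
    using subspace_dist_triangle[OF _ U, of V T] code VC TC(1)
    by (simp add: subspace_dist_commute)
  finally show ?thesis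
    using close by linarith
qed

theorem theorem2:
  fixes C :: "('a::{field,finite}^'n) set set"
    and V V' E U :: "('a^'n) set"
    and k t :: nat
  assumes code: "\<forall>X\<in>C. vec.subspace X"
    and card2: "card C \<ge> 2"
    and VC: "V \<in> C"
    and V'sub: "vec.subspace V'" "V' \<subseteq> V"
    and V'big: "vec.dim V > k \<Longrightarrow> vec.dim V' = k"
    and V'small: "\<not> vec.dim V > k \<Longrightarrow> V' = V"
    and Esub: "vec.subspace E"
    and Eint: "E \<inter> V' = {0}"
    and Edim: "vec.dim E = t"
    and Udef: "U = subspace_sum V' E"
    and bound: "2 * (t + max 0 (int (max_dim C) - int k)) < int (min_dist C)"
  shows "\<forall>T\<in>C. T \<noteq> V \<longrightarrow> subspace_dist U V < subspace_dist U T"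
proof -
  have finC: "finite C"
    using card2 card.infinite by fastforce
  have V: "vec.subspace V"
    using code VC by blast
  have "int (subspace_dist U V) \<le> int t + int (vec.dim V) - int (vec.dim V')"
    using subspace_dist_direct_sum_le[OF V V'sub Esub Eint] Udef Edim by simp
  moreover have "vec.dim V \<le> max_dim C"
    using dim_le_max_dim[OF finC VC] .
  ultimately have "int (subspace_dist U V) \<le> int t + max 0 (int (max_dim C) - int k)"
    using V'big V'small by (cases "vec.dim V > k") auto
  then have "2 * subspace_dist U V < min_dist C"
    using bound by arith
  moreover have "vec.subspace U"
    using subspace_subspace_sum[OF V'sub(1) Esub] Udef by simp
  ultimately show ?thesis
    using subspace_dist_unique_decoding[OF code finC _ VC] by blast
qed

end
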